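(* Let $k$ be the quadratic eigenvalue multiplicity of the QCQP data. If $\mathcal F$ is a semidefinite face of $\Gamma$, then $\dim(\mathcal V(\mathcal F))\ge k$.
   Context: Let $N\ge1$, $m_I,m_E\ge0$, $m=m_I+m_E\ge1$, and $A_0,\dots,A_m\in\mathbb S^N$. The quadratic eigenvalue multiplicity is the largest positive integer $k$ (necessarily dividing $N$; write $N=nk$) such that for every $i\in\{0,\dots,m\}$ there exists $\mathcal A_i\in\mathbb S^n$ with $A_i=I_k\otimes\mathcal A_i$ (Kronecker product). For $\gamma\in\mathbb R^m$, $A(\gamma)=A_0+\sum_{i=1}^m\gamma_iA_i$; $\Gamma:=\{\gamma\in\mathbb R^m: A(\gamma)\succeq 0,\ \gamma_i\ge 0\ \forall i\in\{1,\dots,m_I\}\}$. A nonempty face $\mathcal F$ of $\Gamma$ is semidefinite if no $\gamma\in\mathcal F$ has $A(\gamma)\succ0$; $\mathcal V(\mathcal F):=\{v\in\mathbb R^N: A(\gamma)v=0\ \forall\gamma\in\mathcal F\}$. *)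

theory Defs
  imports "HOL-Analysis.Analysis"
begin

text \<open>Coordinates of R^N are indexed by a finite linearly ordered type 'n;
  the position (0-based) of an index in the standard order is idx.\<close>
definition idx :: "'a::{finite,linorder} \<Rightarrow> nat" where
  "idx i = card {j. j < i}"

definition sym_mat :: "((real, 'n::finite) vec, 'n) vec \<Rightarrow> bool" where
  "sym_mat M \<longleftrightarrow> transpose M = M"

definition psd :: "((real, 'n::finite) vec, 'n) vec \<Rightarrow> bool" where
  "psd M \<longleftrightarrow> (\<forall>x. x \<bullet> (M *v x) \<ge> 0)"

definition pd :: "((real, 'n::finite) vec, 'n) vec \<Rightarrow> bool" where
  "pd M \<longleftrightarrow> (\<forall>x. x \<noteq> 0 \<longrightarrow> x \<bullet> (M *v x) > 0)"

text \<open>M = I_k \<otimes> \<A> for some symmetric n x n matrix \<A>, where N = n k.\<close>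
definition is_kron_id :: "nat \<Rightarrow> ((real, 'n::{finite,linorder}) vec, 'n) vec \<Rightarrow> bool" where
  "is_kron_id k M \<longleftrightarrow> 0 < k \<and> k dvd CARD('n) \<and>
     (let n = CARD('n) div k in
      \<exists>\<A> :: nat \<Rightarrow> nat \<Rightarrow> real.
        (\<forall>a<n. \<forall>b<n. \<A> a b = \<A> b a) \<and>
        (\<forall>i j. M $ i $ j =
           (if idx i div n = idx j div n then \<A> (idx i mod n) (idx j mod n) else 0)))"

definition qe_mult :: "((real, 'n::{finite,linorder}) vec, 'n) vec \<Rightarrow> ('m \<Rightarrow> ((real, 'n) vec, 'n) vec) \<Rightarrow> nat" where
  "qe_mult A0 A = (GREATEST k. is_kron_id k A0 \<and> (\<forall>i. is_kron_id k (A i)))"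

definition Amat :: "((real, 'n::finite) vec, 'n) vec \<Rightarrow> ('m::finite \<Rightarrow> ((real, 'n) vec, 'n) vec) \<Rightarrow> (real, 'm) vec \<Rightarrow> ((real, 'n) vec, 'n) vec" where
  "Amat A0 A \<gamma> = A0 + (\<Sum>i\<in>UNIV. (\<gamma> $ i) *\<^sub>R A i)"

text \<open>Feasible set \<Gamma>; the inequality-constrained indices are the first mI ones.\<close>
definition Gamma_set :: "nat \<Rightarrow> ((real, 'n::finite) vec, 'n) vec \<Rightarrow> ('m::{finite,linorder} \<Rightarrow> ((real, 'n) vec, 'n) vec) \<Rightarrow> (real, 'm) vec set" where
  "Gamma_set mI A0 A = {\<gamma>. psd (Amat A0 A \<gamma>) \<and> (\<forall>i. idx i < mI \<longrightarrow> \<gamma> $ i \<ge> 0)}"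

definition semidef_face :: "nat \<Rightarrow> ((real, 'n::finite) vec, 'n) vec \<Rightarrow> ('m::{finite,linorder} \<Rightarrow> ((real, 'n) vec, 'n) vec) \<Rightarrow> (real, 'm) vec set \<Rightarrow> bool" where
  "semidef_face mI A0 A F \<longleftrightarrow> F face_of Gamma_set mI A0 A \<and> F \<noteq> {} \<and>
     \<not> (\<exists>\<gamma>\<in>F. pd (Amat A0 A \<gamma>))"

definition Vspace :: "((real, 'n::finite) vec, 'n) vec \<Rightarrow> ('m::finite \<Rightarrow> ((real, 'n) vec, 'n) vec) \<Rightarrow> (real, 'm) vec set \<Rightarrow> (real, 'n) vec set" where
  "Vspace A0 A F = {v. \<forall>\<gamma>\<in>F. Amat A0 A \<gamma> *v v = 0}"

end

theory Submission
  imports Defs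
begin

text \<open>On a face \<open>F\<close> of \<open>\<Gamma>\<close> all matrices \<open>A(\<gamma>)\<close> are positive semidefinite, and the kernel
  of a positive combination of PSD matrices is the intersection of their kernels. Hence a point
  \<open>g \<in> F\<close> whose kernel has minimal dimension has the smallest kernel of all, so
  \<open>ker A(g) \<subseteq> \<V>(F)\<close>; since \<open>F\<close> is semidefinite, \<open>ker A(g) \<noteq> 0\<close>. Finally \<open>A(g) = I\<^sub>k \<otimes> \<A>\<close>, and
  copying one block of a nonzero kernel vector into each of the \<open>k\<close> blocks yields \<open>k\<close> mutually
  orthogonal kernel vectors.\<close>

definition mat_ker :: "((real, 'n::finite) vec, 'n) vec \<Rightarrow> (real, 'n) vec set" where
  "mat_ker M = {v. M *v v = 0}"

lemma subspace_mat_ker: "subspace (mat_ker M)"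
  unfolding mat_ker_def subspace_def
  by (simp add: matrix_vector_right_distrib matrix_vector_mult_scaleR)

lemma sym_mat_entry: "sym_mat M \<Longrightarrow> M $ i $ j = M $ j $ i"
  unfolding sym_mat_def transpose_def by (metis vec_lambda_beta)

lemma inner_sym_mat_commute:
  fixes M :: "((real, 'n::finite) vec, 'n) vec"
  assumes "sym_mat M"
  shows "x \<bullet> (M *v y) = y \<bullet> (M *v x)"
proof -
  have "x \<bullet> (M *v y) = (\<Sum>i\<in>UNIV. \<Sum>j\<in>UNIV. x$i * M$i$j * y$j)"
    by (simp add: inner_vec_def matrix_vector_mult_def sum_distrib_left mult.assoc)
  also have "\<dots> = (\<Sum>j\<in>UNIV. \<Sum>i\<in>UNIV. x$i * M$i$j * y$j)"
    by (rule sum.swap)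
  also have "\<dots> = y \<bullet> (M *v x)"
    by (simp add: inner_vec_def matrix_vector_mult_def sum_distrib_left sym_mat_entry[OF assms] mult_ac)
  finally show ?thesis .
qed

lemma psd_quadratic_form_eq_0_imp_ker:
  fixes M :: "((real, 'n::finite) vec, 'n) vec"
  assumes sym: "sym_mat M" and psd: "psd M" and zero: "x \<bullet> (M *v x) = 0"
  shows "M *v x = 0"
proof (rule ccontr)
  assume "M *v x \<noteq> 0"
  \<comment> \<open>then moving \<open>x\<close> slightly in the direction \<open>-M x\<close> makes the quadratic form negative\<close>
  define y where "y = M *v x"
  define a where "a = y \<bullet> y"
  define b where "b = y \<bullet> (M *v y)"
  define t where "t = a / (b + 1)"
  have a: "a > 0" using \<open>M *v x \<noteq> 0\<close> by (simp add: a_def y_def)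
  have b: "b \<ge> 0" using psd by (simp add: psd_def b_def)
  have t: "t > 0" using a b by (simp add: t_def)
  have "(x - t *\<^sub>R y) \<bullet> (M *v (x - t *\<^sub>R y))
      = x \<bullet> (M *v x) - t * (x \<bullet> (M *v y)) - t * (y \<bullet> (M *v x)) + t * t * b"
    by (simp add: algebra_simps inner_diff_left inner_diff_right b_def)
  also have "\<dots> = t * (t * b - 2 * a)"
    using inner_sym_mat_commute[OF sym, of x y] zero by (simp add: a_def y_def algebra_simps)
  finally have quad: "(x - t *\<^sub>R y) \<bullet> (M *v (x - t *\<^sub>R y)) = t * (t * b - 2 * a)" .
  have "t * b = a * (b / (b + 1))"
    by (simp add: t_def)
  also have "\<dots> < a * 1"
    using a b by (intro mult_strict_left_mono) auto
  finally have "t * (t * b - 2 * a) < 0"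
    using t a by (simp add: mult_pos_neg)
  with quad psd show False
    unfolding psd_def by (metis not_le)
qed

lemma psd_not_pd_obtains_ker:
  fixes M :: "((real, 'n::finite) vec, 'n) vec"
  assumes "sym_mat M" "psd M" "\<not> pd M"
  obtains x where "x \<noteq> 0" "M *v x = 0"
proof -
  obtain x where "x \<noteq> 0" "x \<bullet> (M *v x) \<le> 0"
    using assms(3) unfolding pd_def by (auto simp: not_less)
  moreover have "x \<bullet> (M *v x) \<ge> 0"
    using assms(2) by (simp add: psd_def)
  ultimately show thesis
    using that psd_quadratic_form_eq_0_imp_ker[OF assms(1,2)] by (simp add: order_antisym)
qed

lemma mat_ker_psd_combination:
  fixes M N :: "((real, 'n::finite) vec, 'n) vec"
  assumes "sym_mat M" "sym_mat N" "psd M" "psd N" "a > 0" "b > 0"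
  shows "mat_ker (a *\<^sub>R M + b *\<^sub>R N) = mat_ker M \<inter> mat_ker N"
proof (intro equalityI subsetI)
  fix v assume "v \<in> mat_ker (a *\<^sub>R M + b *\<^sub>R N)"
  then have "v \<bullet> ((a *\<^sub>R M + b *\<^sub>R N) *v v) = 0"
    by (simp add: mat_ker_def)
  then have "a * (v \<bullet> (M *v v)) + b * (v \<bullet> (N *v v)) = 0"
    by (simp add: matrix_vector_mult_add_rdistrib
        scaleR_matrix_vector_assoc[symmetric] inner_add_right)
  moreover have "v \<bullet> (M *v v) \<ge> 0" "v \<bullet> (N *v v) \<ge> 0"
    using assms(3,4) by (simp_all add: psd_def)
  ultimately have "v \<bullet> (M *v v) = 0" "v \<bullet> (N *v v) = 0"
    using assms(5,6) by (simp_all add: add_nonneg_eq_0_iff)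
  then show "v \<in> mat_ker M \<inter> mat_ker N"
    using psd_quadratic_form_eq_0_imp_ker[OF assms(1,3)] psd_quadratic_form_eq_0_imp_ker[OF assms(2,4)]
    by (simp add: mat_ker_def)
qed (simp add: mat_ker_def matrix_vector_mult_add_rdistrib scaleR_matrix_vector_assoc[symmetric])

lemma Amat_entry: "Amat A0 A \<gamma> $ i $ j = A0 $ i $ j + (\<Sum>m\<in>UNIV. \<gamma> $ m * A m $ i $ j)"
  by (simp add: Amat_def)

lemma sym_mat_Amat: "sym_mat A0 \<Longrightarrow> (\<And>i. sym_mat (A i)) \<Longrightarrow> sym_mat (Amat A0 A \<gamma>)"
  unfolding sym_mat_def[of "Amat A0 A \<gamma>"] transpose_def
  by (simp add: vec_eq_iff Amat_entry sym_mat_entry)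

lemma Amat_affine:
  assumes "u + v = 1"
  shows "Amat A0 A (u *\<^sub>R g + v *\<^sub>R h) = u *\<^sub>R Amat A0 A g + v *\<^sub>R Amat A0 A h"
proof -
  have "A0 $ i $ j = u * A0 $ i $ j + v * A0 $ i $ j" for i j
    using assms by (metis distrib_right mult_1)
  then show ?thesis
    by (simp add: vec_eq_iff Amat_entry sum.distrib sum_distrib_left algebra_simps)
qed

text \<open>A point of minimal kernel dimension has the smallest kernel: the kernel at the midpoint with
  any other point is the intersection of both kernels, and it cannot be smaller.\<close>
lemma convex_psd_pencil_obtains_least_ker:
  assumes "convex S" "S \<noteq> {}" "sym_mat A0" "\<And>i. sym_mat (A i)"
    and psd: "\<And>\<gamma>. \<gamma> \<in> S \<Longrightarrow> psd (Amat A0 A \<gamma>)"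
  obtains g where "g \<in> S" "\<And>\<gamma>. \<gamma> \<in> S \<Longrightarrow> mat_ker (Amat A0 A g) \<subseteq> mat_ker (Amat A0 A \<gamma>)"
proof -
  let ?K = "\<lambda>\<gamma>. mat_ker (Amat A0 A \<gamma>)"
  obtain g where g: "g \<in> S" and least: "\<And>\<gamma>. \<gamma> \<in> S \<Longrightarrow> dim (?K g) \<le> dim (?K \<gamma>)"
    using ex_has_least_nat[of "\<lambda>\<gamma>. \<gamma> \<in> S" _ "\<lambda>\<gamma>. dim (?K \<gamma>)"] \<open>S \<noteq> {}\<close> by blast
  have "?K g \<subseteq> ?K \<gamma>" if \<gamma>: "\<gamma> \<in> S" for \<gamma>
  proof -
    define m where "m = (1/2) *\<^sub>R g + (1/2) *\<^sub>R \<gamma>"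
    have "m \<in> S"
      unfolding m_def by (rule convexD[OF \<open>convex S\<close> g \<gamma>]) auto
    have Km: "?K m = ?K g \<inter> ?K \<gamma>"
      unfolding m_def Amat_affine[of "1/2" "1/2", simplified]
      by (rule mat_ker_psd_combination) (simp_all add: sym_mat_Amat[OF assms(3,4)] psd g \<gamma>)
    have "?K m = ?K g"
      by (rule subspace_dim_equal[OF subspace_mat_ker subspace_mat_ker])
        (use Km least[OF \<open>m \<in> S\<close>] in auto)
    with Km show ?thesis by auto
  qed
  with g that show thesis by blast
qed

lemma idx_less_card: "idx (i::'a::{finite,linorder}) < CARD('a)"
proof -
  have "{j. j < i} \<subset> UNIV" by auto
  then show ?thesis unfolding idx_def by (simp add: psubset_card_mono)
qed

lemma idx_strict_mono: "(i::'a::{finite,linorder}) < i' \<Longrightarrow> idx i < idx i'"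
proof -
  assume "i < i'"
  then have "{j. j < i} \<subset> {j. j < i'}" by auto
  then show ?thesis unfolding idx_def by (simp add: psubset_card_mono)
qed

lemma inj_idx: "inj (idx :: 'a::{finite,linorder} \<Rightarrow> nat)"
  by (metis idx_strict_mono injI less_irrefl linorder_neqE)

lemma bij_betw_idx: "bij_betw (idx :: 'a::{finite,linorder} \<Rightarrow> nat) UNIV {..<CARD('a)}"
proof -
  have "idx ` (UNIV::'a set) \<subseteq> {..<CARD('a)}"
    using idx_less_card by auto
  moreover have "card (idx ` (UNIV::'a set)) = CARD('a)"
    using inj_idx card_image by blast
  ultimately have "idx ` (UNIV::'a set) = {..<CARD('a)}"
    by (metis card_lessThan card_subset_eq finite_lessThan)
  then show ?thesis using inj_idx by (simp add: bij_betw_def)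
qed

lemma idx_inv_idx [simp]: "p < CARD('a) \<Longrightarrow> idx (inv idx p :: 'a::{finite,linorder}) = p"
  by (metis bij_betw_inv_into_right bij_betw_idx lessThan_iff)

lemma sum_UNIV_idx:
  "(\<Sum>j\<in>(UNIV::'a::{finite,linorder} set). f j) = (\<Sum>q<CARD('a). f (inv idx q))"
  using sum.reindex_bij_betw[OF bij_betw_idx[where 'a='a], of "\<lambda>q. f (inv idx q)"]
  by (simp add: inj_idx)

lemma is_kron_id_1: "sym_mat (M::((real, 'n::{finite,linorder}) vec, 'n) vec) \<Longrightarrow> is_kron_id 1 M"
  unfolding is_kron_id_def Let_def
  by (intro conjI exI[of _ "\<lambda>a b. M $ inv idx a $ inv idx b"])
    (auto simp: idx_less_card sym_mat_entry inj_idx)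

lemma is_kron_id_le_card: "is_kron_id k (M::((real, 'n::{finite,linorder}) vec, 'n) vec) \<Longrightarrow> k \<le> CARD('n)"
  unfolding is_kron_id_def by (simp add: dvd_imp_le)

lemma is_kron_id_qe_mult:
  fixes A0 :: "((real, 'n::{finite,linorder}) vec, 'n) vec"
  assumes "sym_mat A0" "\<And>i. sym_mat (A i)"
  shows "is_kron_id (qe_mult A0 A) A0 \<and> (\<forall>i. is_kron_id (qe_mult A0 A) (A i))"
  unfolding qe_mult_def
  by (rule GreatestI_nat[where k=1 and b="CARD('n)"])
    (use assms is_kron_id_1 is_kron_id_le_card in blast)+

lemma is_kron_id_Amat:
  fixes A0 :: "((real, 'n::{finite,linorder}) vec, 'n) vec"
  assumes "is_kron_id k A0" "\<And>i. is_kron_id k (A i)"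
  shows "is_kron_id k (Amat A0 A \<gamma>)"
proof -
  let ?n = "CARD('n) div k"
  let ?block = "\<lambda>B M. (\<forall>a<?n. \<forall>b<?n. B a b = B b a) \<and> (\<forall>i j. M $ i $ j =
      (if idx i div ?n = idx j div ?n then B (idx i mod ?n) (idx j mod ?n) else 0))"
  obtain B0 where B0: "?block B0 A0"
    using assms(1) unfolding is_kron_id_def Let_def by blast
  obtain B where B: "\<And>m. ?block (B m) (A m)"
    using assms(2) unfolding is_kron_id_def Let_def by metis
  define B\<gamma> where "B\<gamma> a b = B0 a b + (\<Sum>m\<in>UNIV. \<gamma> $ m * B m a b)" for a b
  have "?block B\<gamma> (Amat A0 A \<gamma>)"
    using B0 B by (simp add: B\<gamma>_def Amat_entry)
  with assms(1) show ?thesis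
    unfolding is_kron_id_def Let_def by blast
qed

lemma idx_div_less:
  assumes "CARD('a) = k * n"
  shows "idx (i::'a::{finite,linorder}) div n < k"
  using idx_less_card[of i] assms by (metis less_mult_imp_div_less)

lemma idx_inv_idx_block:
  assumes "CARD('a) = k * n" "c < k" "r < n"
  shows "idx (inv idx (c * n + r) :: 'a::{finite,linorder}) = c * n + r"
proof -
  have "Suc c * n \<le> k * n"
    using assms(2) by (intro mult_le_mono1) simp
  with assms show ?thesis by simp
qed

lemma block_diag_mult_vec:
  fixes M :: "((real, 'n::{finite,linorder}) vec, 'n) vec"
  assumes card: "CARD('n) = k * n"
    and M: "\<And>i j. M $ i $ j = (if idx i div n = idx j div n then B (idx i mod n) (idx j mod n) else 0)"
  shows "(M *v y) $ i = (\<Sum>r<n. B (idx i mod n) r * y $ inv idx (idx i div n * n + r))"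
proof -
  have "(M *v y) $ i = (\<Sum>q<k * n. if q div n = idx i div n then B (idx i mod n) (q mod n) * y $ inv idx q else 0)"
    unfolding matrix_vector_mult_def vec_lambda_beta sum_UNIV_idx card by (intro sum.cong) (auto simp: M card)
  also have "\<dots> = (\<Sum>c<k. if c = idx i div n then \<Sum>r<n. B (idx i mod n) r * y $ inv idx (r + c * n) else 0)"
    unfolding sum_mult_product by (intro sum.cong) auto
  also have "\<dots> = (\<Sum>r<n. B (idx i mod n) r * y $ inv idx (idx i div n * n + r))"
    using idx_div_less[OF card, of i] by (simp add: add.commute)
  finally show ?thesis .
qed

definition block_copy :: "nat \<Rightarrow> nat \<Rightarrow> nat \<Rightarrow> (real, 'n::{finite,linorder}) vec \<Rightarrow> (real, 'n) vec" where
  "block_copy n d c x = (\<chi> i. if idx i div n = c then x $ inv idx (d * n + idx i mod n) else 0)"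

lemma block_copy_block:
  assumes "CARD('n) = k * n" "b < k" "r < n"
  shows "block_copy n d c x $ (inv idx (b * n + r) :: 'n::{finite,linorder})
    = (if b = c then x $ inv idx (d * n + r) else 0)"
  unfolding block_copy_def vec_lambda_beta idx_inv_idx_block[OF assms] using assms by simp

lemma inner_block_copy_eq_0: "c \<noteq> c' \<Longrightarrow> block_copy n d c x \<bullet> block_copy n d c' x = 0"
  unfolding inner_vec_def by (intro sum.neutral) (auto simp: block_copy_def)

lemma block_diag_mult_block_copy_eq_0:
  fixes M :: "((real, 'n::{finite,linorder}) vec, 'n) vec"
  assumes card: "CARD('n) = k * n"
    and M: "\<And>i j. M $ i $ j = (if idx i div n = idx j div n then B (idx i mod n) (idx j mod n) else 0)"
    and "M *v x = 0" "d < k"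
  shows "M *v block_copy n d c x = 0"
proof -
  note row = block_diag_mult_vec[OF card M]
  have "0 < n"
    using card by (metis mult_0_right zero_less_card_finite gr0I)
  have "(M *v block_copy n d c x) $ i = 0" for i
  proof (cases "idx i div n = c")
    case True
    have "(M *v block_copy n d c x) $ i = (\<Sum>r<n. B (idx i mod n) r * x $ inv idx (d * n + r))"
      unfolding row True using True idx_div_less[OF card, of i]
      by (intro sum.cong) (simp_all add: block_copy_block[OF card])
    also have "\<dots> = (M *v x) $ inv idx (d * n + idx i mod n)"
      unfolding row using idx_inv_idx_block[OF card \<open>d < k\<close>] \<open>0 < n\<close> by simp
    finally show ?thesis
      using \<open>M *v x = 0\<close> by simp
  qed (simp add: row block_copy_block[OF card] idx_div_less[OF card])
  then show ?thesis
    by (simp add: vec_eq_iff)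
qed

text \<open>Copying into each of the \<open>k\<close> blocks the block of a nonzero kernel vector that contains a
  nonzero entry gives \<open>k\<close> kernel vectors with disjoint supports.\<close>
lemma is_kron_id_ker_dim:
  fixes M :: "((real, 'n::{finite,linorder}) vec, 'n) vec"
  assumes kron: "is_kron_id k M" and x: "M *v x = 0" "x \<noteq> 0"
  shows "k \<le> dim (mat_ker M)"
proof -
  define n where "n = CARD('n) div k"
  have card: "CARD('n) = k * n"
    using kron by (simp add: is_kron_id_def n_def)
  obtain B where B: "\<And>i j. M $ i $ j =
      (if idx i div n = idx j div n then B (idx i mod n) (idx j mod n) else 0)"
    using kron unfolding is_kron_id_def Let_def n_def by blast
  obtain j where "x $ j \<noteq> 0"
    using x(2) by (metis vec_eq_iff zero_index)
  define d where "d = idx j div n"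
  define r where "r = idx j mod n"
  have "0 < n"
    using card by (metis mult_0_right zero_less_card_finite gr0I)
  then have "d < k" "r < n"
    using idx_div_less[OF card] by (simp_all add: d_def r_def)
  let ?w = "\<lambda>c. block_copy n d c x"
  have w_ker: "?w ` {..<k} \<subseteq> mat_ker M"
    using block_diag_mult_block_copy_eq_0[OF card B x(1) \<open>d < k\<close>] by (auto simp: mat_ker_def)
  have w_nonzero: "?w c \<noteq> 0" if "c < k" for c
  proof -
    have "?w c $ inv idx (c * n + r) = x $ j"
      using that \<open>d < k\<close> \<open>r < n\<close> by (simp add: block_copy_block[OF card] d_def r_def inj_idx)
    with \<open>x $ j \<noteq> 0\<close> show ?thesis by auto
  qed
  have "inj_on ?w {..<k}"
  proof (rule inj_onI, rule ccontr)
    fix c c' assume "c \<in> {..<k}" "?w c = ?w c'" "c \<noteq> c'"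
    then have "?w c \<bullet> ?w c = 0"
      using inner_block_copy_eq_0[of c c' n d x] by simp
    with w_nonzero \<open>c \<in> {..<k}\<close> show False by simp
  qed
  moreover have "independent (?w ` {..<k})"
    using w_nonzero by (intro pairwise_orthogonal_independent)
      (auto simp: pairwise_def orthogonal_def intro!: inner_block_copy_eq_0)
  ultimately show ?thesis
    using independent_card_le_dim[OF w_ker] card_image by fastforce
qed

theorem mainTheorem5:
  fixes A0 :: "((real, 'n::{finite,linorder}) vec, 'n) vec"
    and A :: "'m::{finite,linorder} \<Rightarrow> ((real, 'n) vec, 'n) vec"
    and mI :: nat
    and F :: "(real, 'm) vec set"
  assumes "mI \<le> CARD('m)"
    and "sym_mat A0"
    and "\<And>i. sym_mat (A i)"
    and "semidef_face mI A0 A F"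
  shows "dim (Vspace A0 A F) \<ge> qe_mult A0 A"
proof -
  have face: "F face_of Gamma_set mI A0 A" and "F \<noteq> {}"
    and not_pd: "\<And>\<gamma>. \<gamma> \<in> F \<Longrightarrow> \<not> pd (Amat A0 A \<gamma>)"
    using assms(4) unfolding semidef_face_def by auto
  have psd: "psd (Amat A0 A \<gamma>)" if "\<gamma> \<in> F" for \<gamma>
    using face_of_imp_subset[OF face] that unfolding Gamma_set_def by auto
  have sym: "sym_mat (Amat A0 A \<gamma>)" for \<gamma>
    using sym_mat_Amat assms(2,3) by blast
  obtain g where "g \<in> F" and least_ker: "\<And>\<gamma>. \<gamma> \<in> F \<Longrightarrow> mat_ker (Amat A0 A g) \<subseteq> mat_ker (Amat A0 A \<gamma>)"
    using convex_psd_pencil_obtains_least_ker[OF face_of_imp_convex[OF face] \<open>F \<noteq> {}\<close> assms(2,3) psd] by blast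
  obtain x where "x \<noteq> 0" "Amat A0 A g *v x = 0"
    using psd_not_pd_obtains_ker[OF sym psd not_pd] \<open>g \<in> F\<close> by metis
  moreover have "is_kron_id (qe_mult A0 A) (Amat A0 A g)"
    using is_kron_id_qe_mult[of A0 A] assms(2,3) by (simp add: is_kron_id_Amat)
  ultimately have "qe_mult A0 A \<le> dim (mat_ker (Amat A0 A g))"
    by (intro is_kron_id_ker_dim)
  also have "\<dots> \<le> dim (Vspace A0 A F)"
    using least_ker by (intro dim_subset) (auto simp: Vspace_def mat_ker_def)
  finally show ?thesis .
qed

end
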